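(* Let $K$ be a compact Hausdorff space without isolated points. Then the pair $(C(K),m_0(K))$ has the Daugavet property, where $C(K)$ is regarded as a subspace of $m_0(K)$ via the quotient map $\ell_\infty(K)\to m_0(K)$.
   Context: For a compact Hausdorff space $K$: $\ell_\infty(K)$ is the space of bounded real functions on $K$ with the sup norm; $m(K)=\{f\in\ell_\infty(K): \mathrm{supp}(f)\text{ is a first category set in }K\}$; $m_0(K)=\ell_\infty(K)/m(K)$ with the quotient norm; the quotient map restricted to $C(K)$ is an isometric embedding. If $X$ is a closed subspace of a Banach space $Y$ with inclusion $J$, the pair $(X,Y)$ has the Daugavet property if every bounded rank-one linear operator $T:X\to Y$ satisfies $\|J+T\|=1+\|T\|$. *)

theory Defs
  imports "HOL-Analysis.Analysis"
begin

definition ell_inf :: "('a::topological_space \<Rightarrow> real) set" where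
  "ell_inf = {f. bounded (range f)}"

definition supnorm :: "('a \<Rightarrow> real) \<Rightarrow> real" where
  "supnorm f = (SUP x. \<bar>f x\<bar>)"

definition nowhere_dense :: "'a::topological_space set \<Rightarrow> bool" where
  "nowhere_dense S \<longleftrightarrow> interior (closure S) = {}"

definition first_category :: "'a::topological_space set \<Rightarrow> bool" where
  "first_category S \<longleftrightarrow>
     (\<exists>F. countable F \<and> (\<forall>N\<in>F. nowhere_dense N) \<and> S \<subseteq> \<Union>F)"

definition fsupp :: "('a \<Rightarrow> real) \<Rightarrow> 'a set" where
  "fsupp f = {x. f x \<noteq> 0}"

definition m_space :: "('a::topological_space \<Rightarrow> real) set" where
  "m_space = {f \<in> ell_inf. first_category (fsupp f)}"

text \<open>Quotient norm of the class of f in m_0(K) = l_infinity(K)/m(K).\<close>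
definition qnorm :: "('a::topological_space \<Rightarrow> real) \<Rightarrow> real" where
  "qnorm f = Inf {supnorm (f - g) | g. g \<in> m_space}"

text \<open>Operators C(K) -> m_0(K) are represented by lifts T : C(K) -> l_infinity(K)
  (every operator into the quotient has such a lift); T is linear modulo m(K).\<close>
definition lin_mod_m :: "(('a::topological_space \<Rightarrow>\<^sub>C real) \<Rightarrow> ('a \<Rightarrow> real)) \<Rightarrow> bool" where
  "lin_mod_m T \<longleftrightarrow> (\<forall>x. T x \<in> ell_inf) \<and>
     (\<forall>x y a b. T (a *\<^sub>R x + b *\<^sub>R y) - (\<lambda>t. a * T x t + b * T y t) \<in> m_space)"

definition bounded_mod_m :: "(('a::topological_space \<Rightarrow>\<^sub>C real) \<Rightarrow> ('a \<Rightarrow> real)) \<Rightarrow> bool" where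
  "bounded_mod_m T \<longleftrightarrow> (\<exists>B. \<forall>x. qnorm (T x) \<le> B * norm x)"

definition rank_one_mod_m :: "(('a::topological_space \<Rightarrow>\<^sub>C real) \<Rightarrow> ('a \<Rightarrow> real)) \<Rightarrow> bool" where
  "rank_one_mod_m T \<longleftrightarrow> (\<exists>h\<in>ell_inf. h \<notin> m_space \<and>
      (\<forall>x. \<exists>c. T x - (\<lambda>t. c * h t) \<in> m_space) \<and> (\<exists>x. T x \<notin> m_space))"

definition opnorm_mod_m :: "(('a::topological_space \<Rightarrow>\<^sub>C real) \<Rightarrow> ('a \<Rightarrow> real)) \<Rightarrow> real" where
  "opnorm_mod_m T = (SUP x\<in>{x. norm x \<le> 1}. qnorm (T x))"

text \<open>Daugavet property of the pair (C(K), m_0(K)), J = quotient map restricted to C(K).\<close>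
definition daugavet_CK_m0 :: "'a::topological_space itself \<Rightarrow> bool" where
  "daugavet_CK_m0 _ \<longleftrightarrow>
     (\<forall>T :: ('a \<Rightarrow>\<^sub>C real) \<Rightarrow> ('a \<Rightarrow> real).
        lin_mod_m T \<and> bounded_mod_m T \<and> rank_one_mod_m T \<longrightarrow>
        (SUP x\<in>{x. norm x \<le> 1}. qnorm (\<lambda>t. apply_bcontfun x t + T x t))
          = 1 + opnorm_mod_m T)"

end

(*
  Modulo m(K), a rank-one operator is x \<mapsto> c(x) h with c a bounded functional on C(K) and h not in m(K).
  Take y in the unit ball with |c(y)| \<parallel>h\<parallel> close to \<parallel>T\<parallel>. The set where \<plusminus>h exceeds \<parallel>h\<parallel> - \<delta> is not
  of first category, so by the Banach category theorem it is of second category in every nonempty open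
  subset of some nonempty open W. As K has no isolated points, W contains n disjoint nonempty open sets,
  and on the functions of the unit ball supported in one of them c is at most \<parallel>c\<parallel>/n. Modifying \<plusminus>y
  there by Urysohn's lemma gives x in the unit ball with c(x) close to c(\<plusminus>y) and x close to 1 on a
  nonempty open set; on its second-category intersection with the level set, x + c(x) h is close to
  1 + \<parallel>T\<parallel>, and a set of second category cannot be ignored by the quotient norm.
*)

theory Submission
  imports Defs
begin

section \<open>Sets of first category\<close>

lemma first_categoryI:
  "countable F \<Longrightarrow> (\<And>N. N \<in> F \<Longrightarrow> nowhere_dense N) \<Longrightarrow> S \<subseteq> \<Union>F \<Longrightarrow> first_category S"
  unfolding first_category_def by blast

lemma first_category_empty: "first_category {}"
  by (rule first_categoryI[of "{}"]) auto

lemma first_category_subset: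
  assumes "first_category S" "T \<subseteq> S"
  shows "first_category T"
proof -
  obtain F where "countable F" "\<forall>N\<in>F. nowhere_dense N" "S \<subseteq> \<Union>F"
    using assms(1) unfolding first_category_def by blast
  then show ?thesis
    using assms(2) by (intro first_categoryI[of F]) auto
qed

lemma nowhere_dense_imp_first_category: "nowhere_dense S \<Longrightarrow> first_category S"
  by (rule first_categoryI[of "{S}"]) auto

lemma first_category_seqE:
  fixes S :: "'a::topological_space set"
  assumes "first_category S"
  obtains N :: "nat \<Rightarrow> 'a set" where "\<And>n. nowhere_dense (N n)" "S \<subseteq> (\<Union>n. N n)"
proof -
  obtain F where F: "countable F" "\<forall>N\<in>F. nowhere_dense N" "S \<subseteq> \<Union>F"
    using assms unfolding first_category_def by blast
  define N where "N = from_nat_into (insert {} F)"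
  have range_N: "range N = insert {} F"
    unfolding N_def using F(1) by (intro range_from_nat_into) auto
  show thesis
  proof
    fix n
    have "N n \<in> insert {} F" using range_N by blast
    then show "nowhere_dense (N n)" using F(2) by (auto simp: nowhere_dense_def)
  next
    have "\<Union>(range N) = \<Union>F"
      unfolding range_N by simp
    then show "S \<subseteq> (\<Union>n. N n)"
      using F(3) by simp
  qed
qed

lemma first_category_seqI:
  "(\<And>n::nat. nowhere_dense (N n)) \<Longrightarrow> S \<subseteq> (\<Union>n. N n) \<Longrightarrow> first_category S"
  by (rule first_categoryI[of "range N"]) auto

lemma first_category_UN:
  assumes "countable I" "\<And>i. i \<in> I \<Longrightarrow> first_category (S i)"
  shows "first_category (\<Union>i\<in>I. S i)"
proof -
  have "\<forall>i\<in>I. \<exists>F. countable F \<and> (\<forall>N\<in>F. nowhere_dense N) \<and> S i \<subseteq> \<Union>F"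
    using assms(2) unfolding first_category_def by blast
  then have "\<exists>F. \<forall>i\<in>I. countable (F i) \<and> (\<forall>N\<in>F i. nowhere_dense N) \<and> S i \<subseteq> \<Union>(F i)"
    by (rule bchoice)
  then obtain F where "\<forall>i\<in>I. countable (F i) \<and> (\<forall>N\<in>F i. nowhere_dense N) \<and> S i \<subseteq> \<Union>(F i)"
    by blast
  then have F: "\<And>i. i \<in> I \<Longrightarrow> countable (F i)" "\<And>i N. i \<in> I \<Longrightarrow> N \<in> F i \<Longrightarrow> nowhere_dense N"
    "\<And>i. i \<in> I \<Longrightarrow> S i \<subseteq> \<Union>(F i)"
    by simp_all
  show ?thesis
  proof (rule first_categoryI[of "\<Union>i\<in>I. F i"])
    show "countable (\<Union>i\<in>I. F i)"
      using assms(1) F(1) by (rule countable_UN)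
    show "nowhere_dense N" if "N \<in> (\<Union>i\<in>I. F i)" for N
      using F(2) that by blast
    show "(\<Union>i\<in>I. S i) \<subseteq> \<Union>(\<Union>i\<in>I. F i)"
      using F(3) by blast
  qed
qed

lemma first_category_Un:
  assumes "first_category S" "first_category T"
  shows "first_category (S \<union> T)"
  using first_category_UN[of "{S, T}" id] assms by auto

lemma nowhere_dense_frontier:
  assumes "open G"
  shows "nowhere_dense (frontier G)"
proof -
  have "interior (frontier G) \<inter> G = {}"
    using assms frontier_disjoint_eq interior_subset by blast
  then have "interior (frontier G) \<inter> closure G = {}"
    by (simp add: open_Int_closure_eq_empty)
  moreover have "interior (frontier G) \<subseteq> closure G"
    using interior_subset unfolding frontier_def by blast
  ultimately have "interior (frontier G) = {}"
    by blast
  then show ?thesis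
    unfolding nowhere_dense_def by (simp add: closure_closed)
qed

lemma nowhere_dense_disjoint_Union:
  assumes disj: "pairwise disjnt \<V>" and "\<And>V. V \<in> \<V> \<Longrightarrow> open V"
    and "\<And>V. V \<in> \<V> \<Longrightarrow> nowhere_dense (N V)"
  shows "nowhere_dense (\<Union>V\<in>\<V>. N V \<inter> V)"
  unfolding nowhere_dense_def
proof (rule ccontr)
  define M where "M = (\<Union>V\<in>\<V>. N V \<inter> V)"
  define U where "U = interior (closure M)"
  assume "interior (closure (\<Union>V\<in>\<V>. N V \<inter> V)) \<noteq> {}"
  then have "U \<inter> closure M \<noteq> {}"
    using interior_subset unfolding U_def M_def by blast
  then have "U \<inter> M \<noteq> {}"
    using open_Int_closure_eq_empty[of U M] unfolding U_def by blast
  then obtain s V where V: "V \<in> \<V>" "s \<in> U" "s \<in> V"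
    unfolding M_def by blast
  have "V \<inter> M \<subseteq> N V"
  proof
    fix r assume "r \<in> V \<inter> M"
    then obtain V' where "V' \<in> \<V>" "r \<in> N V'" "r \<in> V'" "r \<in> V"
      unfolding M_def by blast
    moreover have "V' = V"
      using disj V(1) \<open>V' \<in> \<V>\<close> \<open>r \<in> V'\<close> \<open>r \<in> V\<close> unfolding pairwise_def disjnt_def by blast
    ultimately show "r \<in> N V" by simp
  qed
  have "U \<inter> V \<subseteq> closure (V \<inter> M)"
    using open_Int_closure_subset[OF assms(2)[OF V(1)], of M] interior_subset[of "closure M"]
    unfolding U_def by blast
  also have "\<dots> \<subseteq> closure (N V)"
    using \<open>V \<inter> M \<subseteq> N V\<close> by (rule closure_mono)
  finally have "U \<inter> V \<subseteq> interior (closure (N V))"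
    using assms(2)[OF V(1)] by (intro interior_maximal) (auto simp: U_def)
  then show False
    using assms(3)[OF V(1)] V unfolding nowhere_dense_def by blast
qed

lemma first_category_Int_disjoint_Union:
  fixes A :: "'a::topological_space set"
  assumes "pairwise disjnt \<V>" "\<And>V. V \<in> \<V> \<Longrightarrow> open V"
    and "\<And>V. V \<in> \<V> \<Longrightarrow> first_category (A \<inter> V)"
  shows "first_category (A \<inter> \<Union>\<V>)"
proof -
  have "\<exists>N :: nat \<Rightarrow> 'a set. (\<forall>n. nowhere_dense (N n)) \<and> A \<inter> V \<subseteq> (\<Union>n. N n)"
    if "V \<in> \<V>" for V
    using first_category_seqE[OF assms(3)[OF that]] by metis
  then have "\<exists>N :: 'a set \<Rightarrow> nat \<Rightarrow> 'a set. \<forall>V\<in>\<V>. (\<forall>n. nowhere_dense (N V n)) \<and> A \<inter> V \<subseteq> (\<Union>n. N V n)"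
    by (intro bchoice) blast
  then obtain N :: "'a set \<Rightarrow> nat \<Rightarrow> 'a set"
    where N: "\<And>V n. V \<in> \<V> \<Longrightarrow> nowhere_dense (N V n)" "\<And>V. V \<in> \<V> \<Longrightarrow> A \<inter> V \<subseteq> (\<Union>n. N V n)"
    by blast
  show ?thesis
  proof (rule first_category_seqI)
    show "nowhere_dense (\<Union>V\<in>\<V>. N V n \<inter> V)" for n
      using N(1) by (intro nowhere_dense_disjoint_Union assms(1,2))
    show "A \<inter> \<Union>\<V> \<subseteq> (\<Union>n. \<Union>V\<in>\<V>. N V n \<inter> V)"
    proof
      fix t assume "t \<in> A \<inter> \<Union>\<V>"
      then obtain V where "V \<in> \<V>" "t \<in> A \<inter> V" by blast
      moreover from this obtain n where "t \<in> N V n" using N(2) by blast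
      ultimately show "t \<in> (\<Union>n. \<Union>V\<in>\<V>. N V n \<inter> V)" by blast
    qed
  qed
qed

lemma exists_maximal_disjoint_subfamily:
  fixes P :: "'a set set"
  obtains \<V> where "\<V> \<subseteq> P" "pairwise disjnt \<V>"
    "\<And>V. V \<in> P \<Longrightarrow> (\<forall>W\<in>\<V>. disjnt V W) \<Longrightarrow> V \<in> \<V>"
proof -
  define Fam where "Fam = {\<V>. \<V> \<subseteq> P \<and> pairwise disjnt \<V>}"
  have "\<Union>C \<in> Fam" if C: "C \<in> chains Fam" for C
  proof -
    have sub: "C \<subseteq> Fam" and ch: "chain\<^sub>\<subseteq> C"
      using C unfolding chains_def by auto
    have "pairwise disjnt (\<Union>C)"
    proof (rule pairwiseI)
      fix X Y assume "X \<in> \<Union>C" "Y \<in> \<Union>C" "X \<noteq> Y"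
      then obtain CX CY where "CX \<in> C" "CY \<in> C" "X \<in> CX" "Y \<in> CY"
        by blast
      moreover have "CX \<subseteq> CY \<or> CY \<subseteq> CX"
        using ch \<open>CX \<in> C\<close> \<open>CY \<in> C\<close> unfolding chain_subset_def by blast
      ultimately show "disjnt X Y"
        using sub \<open>X \<noteq> Y\<close> unfolding Fam_def pairwise_def by blast
    qed
    then show ?thesis
      using sub unfolding Fam_def by blast
  qed
  then obtain \<V> where \<V>: "\<V> \<in> Fam" and max: "\<And>X. X \<in> Fam \<Longrightarrow> \<V> \<subseteq> X \<Longrightarrow> X = \<V>"
    using Zorn_Lemma[of Fam] by blast
  show thesis
  proof
    show "\<V> \<subseteq> P" "pairwise disjnt \<V>"
      using \<V> unfolding Fam_def by auto
    fix V assume "V \<in> P" "\<forall>W\<in>\<V>. disjnt V W"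
    then have "insert V \<V> \<in> Fam"
      using \<V> unfolding Fam_def by (auto simp: pairwise_insert disjnt_sym)
    then show "V \<in> \<V>"
      using max by blast
  qed
qed

text \<open>Banach category theorem.\<close>

lemma first_category_Int_Union_open:
  assumes "\<And>U. U \<in> \<U> \<Longrightarrow> open U" "\<And>U. U \<in> \<U> \<Longrightarrow> first_category (A \<inter> U)"
  shows "first_category (A \<inter> \<Union>\<U>)"
proof -
  define P where "P = {V. open V \<and> V \<noteq> {} \<and> (\<exists>U\<in>\<U>. V \<subseteq> U)}"
  obtain \<V> where "\<V> \<subseteq> P" and disj: "pairwise disjnt \<V>"
    and max: "\<And>V. V \<in> P \<Longrightarrow> (\<forall>W\<in>\<V>. disjnt V W) \<Longrightarrow> V \<in> \<V>"
    using exists_maximal_disjoint_subfamily[of P] by blast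
  then have \<V>: "\<And>V. V \<in> \<V> \<Longrightarrow> open V \<and> (\<exists>U\<in>\<U>. V \<subseteq> U)"
    unfolding P_def by blast
  define G where "G = \<Union>\<V>"
  have "open G"
    unfolding G_def using \<V> by blast
  have "\<Union>\<U> \<subseteq> closure G"
  proof
    fix t assume "t \<in> \<Union>\<U>"
    then obtain U where U: "U \<in> \<U>" "t \<in> U" by blast
    show "t \<in> closure G"
    proof (rule ccontr)
      assume "t \<notin> closure G"
      then have "U - closure G \<in> P"
        using U assms(1) unfolding P_def by blast
      moreover have "\<forall>W\<in>\<V>. disjnt (U - closure G) W"
        using closure_subset[of G] unfolding G_def disjnt_def by blast
      ultimately have "U - closure G \<subseteq> G"
        using max unfolding G_def by blast
      then show False
        using U \<open>t \<notin> closure G\<close> closure_subset[of G] by blast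
    qed
  qed
  have "first_category (A \<inter> G)"
    unfolding G_def
  proof (rule first_category_Int_disjoint_Union[OF disj])
    fix V assume "V \<in> \<V>"
    then obtain U where "U \<in> \<U>" "V \<subseteq> U" "open V" using \<V> by blast
    then show "open V" "first_category (A \<inter> V)"
      using assms(2) first_category_subset[of "A \<inter> U"] by blast+
  qed
  moreover have "A \<inter> \<Union>\<U> \<subseteq> (A \<inter> G) \<union> frontier G"
    using \<open>\<Union>\<U> \<subseteq> closure G\<close> \<open>open G\<close> unfolding frontier_def by (auto simp: interior_open)
  ultimately show ?thesis
    using first_category_Un nowhere_dense_imp_first_category nowhere_dense_frontier[OF \<open>open G\<close>]
      first_category_subset by metis
qed

lemma not_first_category_localize:
  assumes "\<not> first_category A"
  obtains W where "open W" "W \<noteq> {}"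
    "\<And>V. open V \<Longrightarrow> V \<noteq> {} \<Longrightarrow> V \<subseteq> W \<Longrightarrow> \<not> first_category (A \<inter> V)"
proof
  define W0 where "W0 = \<Union>{U. open U \<and> first_category (A \<inter> U)}"
  have "open W0"
    unfolding W0_def by auto
  have "first_category (A \<inter> W0)"
    unfolding W0_def by (rule first_category_Int_Union_open) auto
  then have "first_category ((A \<inter> W0) \<union> frontier W0)"
    using first_category_Un nowhere_dense_imp_first_category nowhere_dense_frontier[OF \<open>open W0\<close>]
    by blast
  moreover have "A \<inter> closure W0 \<subseteq> (A \<inter> W0) \<union> frontier W0"
    using \<open>open W0\<close> unfolding frontier_def by (auto simp: interior_open)
  ultimately show "- closure W0 \<noteq> {}"
    using assms first_category_subset by fastforce
  show "open (- closure W0)"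
    by auto
  fix V assume V: "open V" "V \<noteq> {}" "V \<subseteq> - closure W0"
  show "\<not> first_category (A \<inter> V)"
  proof
    assume "first_category (A \<inter> V)"
    then have "V \<subseteq> W0"
      unfolding W0_def using V(1) by blast
    then show False
      using V closure_subset[of W0] by blast
  qed
qed

section \<open>The quotient norm of m_0(K)\<close>

lemma ell_inf_iff: "f \<in> ell_inf \<longleftrightarrow> (\<exists>B. \<forall>t. \<bar>f t\<bar> \<le> B)"
  unfolding ell_inf_def bounded_iff by auto

lemma ell_infI: "(\<And>t. \<bar>f t\<bar> \<le> B) \<Longrightarrow> f \<in> ell_inf"
  unfolding ell_inf_iff by blast

lemma ell_infE:
  assumes "f \<in> ell_inf"
  obtains B where "\<And>t. \<bar>f t\<bar> \<le> B"
  using assms unfolding ell_inf_iff by blast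

lemma ell_inf_add: "f \<in> ell_inf \<Longrightarrow> g \<in> ell_inf \<Longrightarrow> (\<lambda>t. f t + g t) \<in> ell_inf"
proof -
  assume "f \<in> ell_inf" "g \<in> ell_inf"
  then obtain B C where "\<And>t. \<bar>f t\<bar> \<le> B" "\<And>t. \<bar>g t\<bar> \<le> C"
    by (meson ell_infE)
  then show ?thesis
    by (intro ell_infI[of _ "B + C"]) (meson abs_triangle_ineq add_mono order_trans)
qed

lemma ell_inf_scale: "f \<in> ell_inf \<Longrightarrow> (\<lambda>t. k * f t) \<in> ell_inf"
proof -
  assume "f \<in> ell_inf"
  then obtain B where "\<And>t. \<bar>f t\<bar> \<le> B"
    by (meson ell_infE)
  then show ?thesis
    by (intro ell_infI[of _ "\<bar>k\<bar> * B"]) (simp add: abs_mult mult_left_mono)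
qed

lemma ell_inf_diff: "f \<in> ell_inf \<Longrightarrow> g \<in> ell_inf \<Longrightarrow> f - g \<in> ell_inf"
  using ell_inf_add[of f "\<lambda>t. (-1) * g t"] ell_inf_scale[of g "-1"] by (simp add: fun_diff_def)

lemma apply_bcontfun_in_ell_inf: "apply_bcontfun x \<in> ell_inf"
  using norm_bounded[of x] by (intro ell_infI[of _ "norm x"]) simp

lemma supnorm_upper:
  assumes "f \<in> ell_inf"
  shows "\<bar>f t\<bar> \<le> supnorm f"
proof -
  obtain B where "\<And>t. \<bar>f t\<bar> \<le> B"
    using assms by (meson ell_infE)
  then have "bdd_above (range (\<lambda>t. \<bar>f t\<bar>))"
    by (intro bdd_aboveI2)
  then show ?thesis
    unfolding supnorm_def by (rule cSUP_upper[OF UNIV_I])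
qed

lemma supnorm_least: "(\<And>t. \<bar>f t\<bar> \<le> r) \<Longrightarrow> supnorm f \<le> r"
  unfolding supnorm_def by (rule cSUP_least) auto

lemma supnorm_apply_bcontfun_le: "supnorm (apply_bcontfun x) \<le> norm x"
  using norm_bounded[of x] by (intro supnorm_least) simp

lemma m_space_in_ell_inf: "f \<in> m_space \<Longrightarrow> f \<in> ell_inf"
  unfolding m_space_def by blast

lemma m_space_first_category: "f \<in> m_space \<Longrightarrow> first_category (fsupp f)"
  unfolding m_space_def by blast

lemma m_spaceI: "f \<in> ell_inf \<Longrightarrow> first_category (fsupp f) \<Longrightarrow> f \<in> m_space"
  unfolding m_space_def by blast

lemma m_space_zero: "(\<lambda>t. 0) \<in> m_space"
  by (intro m_spaceI ell_infI[of _ 0]) (simp_all add: fsupp_def first_category_empty)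

lemma m_space_add:
  assumes "f \<in> m_space" "g \<in> m_space"
  shows "(\<lambda>t. f t + g t) \<in> m_space"
proof (rule m_spaceI)
  show "(\<lambda>t. f t + g t) \<in> ell_inf"
    using assms by (intro ell_inf_add m_space_in_ell_inf)
  have "fsupp (\<lambda>t. f t + g t) \<subseteq> fsupp f \<union> fsupp g"
    unfolding fsupp_def by auto
  then show "first_category (fsupp (\<lambda>t. f t + g t))"
    using assms by (meson first_category_Un first_category_subset m_space_first_category)
qed

lemma m_space_scale:
  assumes "f \<in> m_space"
  shows "(\<lambda>t. k * f t) \<in> m_space"
proof (rule m_spaceI)
  show "(\<lambda>t. k * f t) \<in> ell_inf"
    using assms by (intro ell_inf_scale m_space_in_ell_inf)
  have "fsupp (\<lambda>t. k * f t) \<subseteq> fsupp f"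
    unfolding fsupp_def by auto
  then show "first_category (fsupp (\<lambda>t. k * f t))"
    using assms first_category_subset m_space_first_category by blast
qed

lemma m_space_diff: "f \<in> m_space \<Longrightarrow> g \<in> m_space \<Longrightarrow> f - g \<in> m_space"
  using m_space_add[of f "\<lambda>t. (-1) * g t"] m_space_scale[of g "-1"] by (simp add: fun_diff_def)

lemma qnorm_eq_INF: "qnorm f = (INF g\<in>m_space. supnorm (f - g))"
  unfolding qnorm_def by (simp add: Setcompr_eq_image)

lemma qnorm_le:
  assumes "f \<in> ell_inf" "g \<in> m_space"
  shows "qnorm f \<le> supnorm (f - g)"
proof -
  have "0 \<le> supnorm (f - g')" if "g' \<in> m_space" for g'
    using supnorm_upper[of "f - g'"] assms(1) that
    by (meson abs_ge_zero ell_inf_diff m_space_in_ell_inf order_trans)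
  then show ?thesis
    unfolding qnorm_eq_INF using assms(2) by (intro cINF_lower bdd_belowI2) auto
qed

lemma qnorm_greatest: "(\<And>g. g \<in> m_space \<Longrightarrow> r \<le> supnorm (f - g)) \<Longrightarrow> r \<le> qnorm f"
  unfolding qnorm_eq_INF using m_space_zero by (intro cINF_greatest) auto

lemma qnorm_le_supnorm: "f \<in> ell_inf \<Longrightarrow> qnorm f \<le> supnorm f"
  using qnorm_le[OF _ m_space_zero, of f] by (simp add: fun_diff_def)

lemma qnorm_nonneg: "f \<in> ell_inf \<Longrightarrow> 0 \<le> qnorm f"
  by (intro qnorm_greatest) (meson abs_ge_zero ell_inf_diff m_space_in_ell_inf order_trans supnorm_upper)

lemma qnorm_cong:
  assumes "f - f' \<in> m_space"
  shows "qnorm f = qnorm f'"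
proof -
  have translate: "(\<lambda>g. g - (f - f')) ` m_space = m_space"
  proof
    show "(\<lambda>g. g - (f - f')) ` m_space \<subseteq> m_space"
      using assms m_space_diff by blast
    show "m_space \<subseteq> (\<lambda>g. g - (f - f')) ` m_space"
    proof
      fix g :: "'a \<Rightarrow> real" assume "g \<in> m_space"
      then have "(\<lambda>t. g t + (f - f') t) \<in> m_space"
        using assms by (rule m_space_add)
      moreover have "g = (\<lambda>t. g t + (f - f') t) - (f - f')"
        by (simp add: fun_eq_iff)
      ultimately show "g \<in> (\<lambda>g. g - (f - f')) ` m_space"
        unfolding image_iff by blast
    qed
  qed
  have "qnorm f = (INF g\<in>m_space. supnorm (f' - (g - (f - f'))))"
    unfolding qnorm_eq_INF by (intro INF_cong refl) (simp add: fun_diff_def)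
  also have "\<dots> = (INF g\<in>(\<lambda>g. g - (f - f')) ` m_space. supnorm (f' - g))"
    by (simp add: image_image)
  also have "\<dots> = qnorm f'"
    unfolding translate qnorm_eq_INF ..
  finally show ?thesis .
qed

lemma qnorm_triangle:
  assumes "f \<in> ell_inf" "g \<in> ell_inf"
  shows "qnorm (\<lambda>t. f t + g t) \<le> qnorm f + qnorm g"
proof -
  have "qnorm (\<lambda>t. f t + g t) - supnorm (g - v) \<le> qnorm f" if v: "v \<in> m_space" for v :: "'a \<Rightarrow> real"
  proof (rule qnorm_greatest)
    fix u :: "'a \<Rightarrow> real" assume u: "u \<in> m_space"
    have "qnorm (\<lambda>t. f t + g t) \<le> supnorm ((\<lambda>t. f t + g t) - (\<lambda>t. u t + v t))"
      using assms u v by (intro qnorm_le ell_inf_add m_space_add)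
    also have "\<dots> \<le> supnorm (f - u) + supnorm (g - v)"
    proof (rule supnorm_least)
      fix t
      have "\<bar>((\<lambda>t. f t + g t) - (\<lambda>t. u t + v t)) t\<bar> \<le> \<bar>(f - u) t\<bar> + \<bar>(g - v) t\<bar>"
        by simp
      also have "\<dots> \<le> supnorm (f - u) + supnorm (g - v)"
        using assms m_space_in_ell_inf[OF u] m_space_in_ell_inf[OF v]
        by (intro add_mono supnorm_upper ell_inf_diff)
      finally show "\<bar>((\<lambda>t. f t + g t) - (\<lambda>t. u t + v t)) t\<bar> \<le> supnorm (f - u) + supnorm (g - v)" .
    qed
    finally show "qnorm (\<lambda>t. f t + g t) - supnorm (g - v) \<le> supnorm (f - u)"
      by simp
  qed
  then have "qnorm (\<lambda>t. f t + g t) - qnorm f \<le> qnorm g"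
    by (intro qnorm_greatest) (simp add: algebra_simps)
  then show ?thesis
    by simp
qed

lemma qnorm_apply_bcontfun_add_le:
  assumes "f \<in> ell_inf"
  shows "qnorm (\<lambda>t. apply_bcontfun x t + f t) \<le> norm x + qnorm f"
  using qnorm_triangle[OF apply_bcontfun_in_ell_inf assms, of x]
    qnorm_le_supnorm[OF apply_bcontfun_in_ell_inf, of x] supnorm_apply_bcontfun_le[of x]
  by linarith

lemma qnorm_scale_le:
  assumes "f \<in> ell_inf" "k \<noteq> 0"
  shows "qnorm (\<lambda>t. k * f t) \<le> \<bar>k\<bar> * qnorm f"
proof -
  have "qnorm (\<lambda>t. k * f t) / \<bar>k\<bar> \<le> qnorm f"
  proof (rule qnorm_greatest)
    fix g :: "'a \<Rightarrow> real" assume g: "g \<in> m_space"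
    have "qnorm (\<lambda>t. k * f t) \<le> supnorm ((\<lambda>t. k * f t) - (\<lambda>t. k * g t))"
      using assms g by (intro qnorm_le ell_inf_scale m_space_scale)
    also have "\<dots> \<le> \<bar>k\<bar> * supnorm (f - g)"
    proof (rule supnorm_least)
      fix t
      have "\<bar>(f - g) t\<bar> \<le> supnorm (f - g)"
        using assms(1) m_space_in_ell_inf[OF g] by (intro supnorm_upper ell_inf_diff)
      then show "\<bar>((\<lambda>t. k * f t) - (\<lambda>t. k * g t)) t\<bar> \<le> \<bar>k\<bar> * supnorm (f - g)"
        by (simp add: abs_mult mult_left_mono flip: right_diff_distrib)
    qed
    finally show "qnorm (\<lambda>t. k * f t) / \<bar>k\<bar> \<le> supnorm (f - g)"
      using assms(2) by (simp add: divide_le_eq mult.commute)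
  qed
  then show ?thesis
    using assms(2) by (simp add: divide_le_eq mult.commute)
qed

lemma qnorm_scale:
  assumes "f \<in> ell_inf"
  shows "qnorm (\<lambda>t. k * f t) = \<bar>k\<bar> * qnorm f"
proof (cases "k = 0")
  case True
  have zero: "(\<lambda>t::'a. 0::real) \<in> ell_inf"
    by (rule ell_infI[of _ 0]) simp
  have "qnorm (\<lambda>t::'a. 0::real) \<le> 0"
    using qnorm_le_supnorm[OF zero] supnorm_least[of "\<lambda>t::'a. 0::real" 0] by simp
  then show ?thesis
    using True qnorm_nonneg[OF zero] by simp
next
  case False
  have "qnorm f = qnorm (\<lambda>t. (1 / k) * (k * f t))"
    using False by simp
  also have "\<dots> \<le> \<bar>1 / k\<bar> * qnorm (\<lambda>t. k * f t)"
    using assms False by (intro qnorm_scale_le ell_inf_scale) auto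
  finally have "\<bar>k\<bar> * qnorm f \<le> qnorm (\<lambda>t. k * f t)"
    using False by (simp add: field_simps)
  then show ?thesis
    using qnorm_scale_le[OF assms False] by simp
qed

lemma qnorm_ge_if_not_first_category:
  assumes "f \<in> ell_inf" "\<not> first_category {t. r \<le> \<bar>f t\<bar>}"
  shows "r \<le> qnorm f"
proof (rule qnorm_greatest)
  fix g :: "'a \<Rightarrow> real" assume g: "g \<in> m_space"
  have "\<not> {t. r \<le> \<bar>f t\<bar>} \<subseteq> fsupp g"
    using assms(2) m_space_first_category[OF g] first_category_subset by blast
  then obtain t where "r \<le> \<bar>f t\<bar>" "g t = 0"
    unfolding fsupp_def by blast
  moreover have "\<bar>(f - g) t\<bar> \<le> supnorm (f - g)"
    using assms(1) m_space_in_ell_inf[OF g] by (intro supnorm_upper ell_inf_diff)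
  ultimately show "r \<le> supnorm (f - g)"
    by simp
qed

lemma qnorm_pos:
  assumes "f \<in> ell_inf" "f \<notin> m_space"
  shows "0 < qnorm f"
proof -
  have "fsupp f = (\<Union>n. {t. 1 / (real n + 1) \<le> \<bar>f t\<bar>})"
  proof (intro set_eqI iffI)
    fix t assume "t \<in> fsupp f"
    then obtain n where "inverse (real (Suc n)) < \<bar>f t\<bar>"
      using reals_Archimedean[of "\<bar>f t\<bar>"] unfolding fsupp_def by auto
    then have "1 / (real n + 1) \<le> \<bar>f t\<bar>"
      by (simp add: inverse_eq_divide add.commute)
    then show "t \<in> (\<Union>n. {t. 1 / (real n + 1) \<le> \<bar>f t\<bar>})"
      by blast
  qed (auto simp: fsupp_def)
  moreover have "\<not> first_category (fsupp f)"
    using assms m_spaceI by blast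
  ultimately obtain n where "\<not> first_category {t. 1 / (real n + 1) \<le> \<bar>f t\<bar>}"
    using first_category_UN[of UNIV "\<lambda>n. {t. 1 / (real n + 1) \<le> \<bar>f t\<bar>}"] by auto
  then have "1 / (real n + 1) \<le> qnorm f"
    by (rule qnorm_ge_if_not_first_category[OF assms(1)])
  moreover have "0 < 1 / (real n + 1)"
    by simp
  ultimately show ?thesis
    by linarith
qed

lemma not_first_category_level_set:
  assumes "f \<in> ell_inf" "0 \<le> r" "r < qnorm f"
  shows "\<not> first_category {t. r < \<bar>f t\<bar>}"
proof
  assume meagre: "first_category {t. r < \<bar>f t\<bar>}"
  define g where "g t = (if r < \<bar>f t\<bar> then f t else 0)" for t
  obtain B where B: "\<And>t. \<bar>f t\<bar> \<le> B"
    using assms(1) by (meson ell_infE)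
  have "\<bar>g t\<bar> \<le> B" for t
    using B[of t] abs_ge_zero[of "f t"] unfolding g_def by auto
  then have "g \<in> ell_inf"
    by (rule ell_infI)
  moreover have "fsupp g \<subseteq> {t. r < \<bar>f t\<bar>}"
    unfolding fsupp_def g_def by auto
  ultimately have "g \<in> m_space"
    using meagre first_category_subset m_spaceI by blast
  then have "qnorm f \<le> supnorm (f - g)"
    by (rule qnorm_le[OF assms(1)])
  also have "\<dots> \<le> r"
    using assms(2) by (intro supnorm_least) (simp add: g_def)
  finally show False
    using assms(3) by simp
qed

section \<open>Continuous functions and bounded functionals on C(K)\<close>

lemma urysohn_point:
  fixes p :: "'a::t2_space"
  assumes "compact (UNIV :: 'a set)" "open V" "p \<in> V"
  obtains u :: "'a \<Rightarrow> real"
  where "continuous_on UNIV u" "\<And>t. 0 \<le> u t \<and> u t \<le> 1" "u p = 1" "\<And>t. t \<notin> V \<Longrightarrow> u t = 0"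
proof -
  have "Hausdorff_space (euclidean :: 'a topology)"
    unfolding Hausdorff_space_def disjnt_def by (metis hausdorff open_openin)
  moreover have "compact_space (euclidean :: 'a topology)"
    using assms(1) by (simp add: compact_space_def)
  ultimately have "completely_regular_space (euclidean :: 'a topology)"
    by (meson compact_Hausdorff_or_regular_imp_normal_space normal_imp_completely_regular_space)
  moreover have "closedin euclidean (- V)" "p \<in> topspace euclidean - (- V)"
    using assms(2,3) by (simp_all add: closed_open)
  ultimately obtain f :: "'a \<Rightarrow> real"
    where f: "continuous_map euclidean (top_of_set {0..1}) f" "f p = 0" "f ` (- V) \<subseteq> {1}"
    unfolding completely_regular_space_def by blast
  then have "continuous_on UNIV f" "\<And>t. f t \<in> {0..1}"
    by (auto simp: continuous_map_in_subtopology)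
  then show thesis
    using f(2,3) by (intro that[of "\<lambda>t. 1 - f t"] continuous_intros) auto
qed

lemma exists_peak_perturbation:
  fixes y :: "'a::t2_space \<Rightarrow>\<^sub>C real"
  assumes "compact (UNIV :: 'a set)" "open V" "p \<in> V" "norm y \<le> 1"
  obtains x where "norm x \<le> 1" "apply_bcontfun x p = 1"
    "\<And>t. t \<notin> V \<Longrightarrow> apply_bcontfun x t = apply_bcontfun y t"
proof -
  obtain u :: "'a \<Rightarrow> real" where u: "continuous_on UNIV u" "\<And>t. 0 \<le> u t \<and> u t \<le> 1"
    "u p = 1" "\<And>t. t \<notin> V \<Longrightarrow> u t = 0"
    using urysohn_point[OF assms(1-3)] by blast
  define f where "f t = u t + (1 - u t) * apply_bcontfun y t" for t
  have "\<bar>f t\<bar> \<le> 1" for t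
  proof -
    have "\<bar>apply_bcontfun y t\<bar> \<le> 1"
      using norm_bounded[of y t] assms(4) by simp
    then have "\<bar>(1 - u t) * apply_bcontfun y t\<bar> \<le> 1 - u t"
      using u(2)[of t] by (simp add: abs_mult mult_left_le)
    then show ?thesis
      using u(2)[of t] unfolding f_def by linarith
  qed
  moreover have "continuous_on UNIV f"
    unfolding f_def using u(1) by (intro continuous_intros) auto
  ultimately have "apply_bcontfun (Bcontfun f) = f"
    by (intro Bcontfun_inverse bcontfun_normI) auto
  then show thesis
    using \<open>\<And>t. \<bar>f t\<bar> \<le> 1\<close> u(3,4)
    by (intro that[of "Bcontfun f"] norm_bound) (auto simp: f_def)
qed

lemma exists_disjoint_open_subsets:
  fixes W :: "'a::t2_space set" and n :: nat
  assumes perfect: "\<And>x::'a. x islimpt UNIV" and "open W" "W \<noteq> {}"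
  shows "\<exists>V. (\<forall>i<n. open (V i) \<and> V i \<noteq> {} \<and> V i \<subseteq> W) \<and> disjoint_family_on V {..<n}"
  using assms(2,3)
proof (induction n arbitrary: W)
  case 0
  then show ?case by (auto simp: disjoint_family_on_def)
next
  case (Suc n)
  obtain p where p: "p \<in> W"
    using Suc.prems by blast
  obtain q where q: "q \<in> W" "q \<noteq> p"
    using islimptE[OF perfect p Suc.prems(1)] by blast
  obtain P Q where PQ: "open P" "open Q" "p \<in> P" "q \<in> Q" "P \<inter> Q = {}"
    using hausdorff[OF q(2)[symmetric]] by blast
  obtain V where V: "\<forall>i<n. open (V i) \<and> V i \<noteq> {} \<and> V i \<subseteq> W \<inter> Q" "disjoint_family_on V {..<n}"
    using Suc.IH[of "W \<inter> Q"] Suc.prems(1) PQ(2,4) q(1) by blast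
  define V' where "V' = V(n := W \<inter> P)"
  have "\<forall>i<Suc n. open (V' i) \<and> V' i \<noteq> {} \<and> V' i \<subseteq> W"
    using V(1) Suc.prems(1) PQ(1,3) p unfolding V'_def less_Suc_eq by auto
  moreover have "V' n \<inter> (\<Union>i<n. V' i) = {}"
    using V(1) PQ(5) unfolding V'_def by auto
  moreover have "disjoint_family_on V' {..<n}"
    using V(2) unfolding V'_def disjoint_family_on_def by auto
  ultimately show ?case
    by (intro exI[of _ V']) (simp add: lessThan_Suc disjoint_family_on_insert)
qed

lemma apply_bcontfun_sum: "apply_bcontfun (sum g I) t = (\<Sum>i\<in>I. apply_bcontfun (g i) t)"
  by (induction I rule: infinite_finite_induct) auto

lemma norm_sum_disjoint_supports_le:
  fixes g :: "nat \<Rightarrow> ('a::topological_space \<Rightarrow>\<^sub>C real)" and n :: nat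
  assumes disj: "disjoint_family_on V {..<n}"
    and g: "\<And>i. i < n \<Longrightarrow> norm (g i) \<le> 1" "\<And>i t. i < n \<Longrightarrow> t \<notin> V i \<Longrightarrow> apply_bcontfun (g i) t = 0"
    and s: "\<And>i. \<bar>s i\<bar> \<le> 1"
  shows "norm (\<Sum>i<n. s i *\<^sub>R g i) \<le> 1"
proof (rule norm_bound)
  fix t
  define I where "I = {i. i < n \<and> t \<in> V i}"
  have "apply_bcontfun (\<Sum>i<n. s i *\<^sub>R g i) t = (\<Sum>i<n. s i * apply_bcontfun (g i) t)"
    by (simp add: apply_bcontfun_sum)
  also have "\<dots> = (\<Sum>i\<in>I. s i * apply_bcontfun (g i) t)"
    using g(2) by (intro sum.mono_neutral_right) (auto simp: I_def)
  finally have "apply_bcontfun (\<Sum>i<n. s i *\<^sub>R g i) t = (\<Sum>i\<in>I. s i * apply_bcontfun (g i) t)" .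
  moreover have "I = {} \<or> (\<exists>j. I = {j})"
    using disj unfolding I_def disjoint_family_on_def by blast
  moreover have "\<bar>s j * apply_bcontfun (g j) t\<bar> \<le> 1" if "j \<in> I" for j
    using s[of j] norm_bounded[of "g j" t] g(1)[of j] that
    by (auto simp: I_def abs_mult intro: mult_le_one)
  ultimately show "norm (apply_bcontfun (\<Sum>i<n. s i *\<^sub>R g i) t) \<le> 1"
    by auto
qed

lemma exists_piece_small_functional:
  fixes c :: "('a::topological_space \<Rightarrow>\<^sub>C real) \<Rightarrow> real" and n :: nat
  assumes c: "bounded_linear c" and "0 < n" and disj: "disjoint_family_on V {..<n}"
  shows "\<exists>i<n. \<forall>g. norm g \<le> 1 \<and> (\<forall>t. t \<notin> V i \<longrightarrow> apply_bcontfun g t = 0)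
           \<longrightarrow> \<bar>c g\<bar> \<le> onorm c / n"
proof (rule ccontr)
  assume "\<not> ?thesis"
  then obtain g where g: "\<And>i. i < n \<Longrightarrow> norm (g i) \<le> 1 \<and>
      (\<forall>t. t \<notin> V i \<longrightarrow> apply_bcontfun (g i) t = 0) \<and> onorm c / n < \<bar>c (g i)\<bar>"
    by (metis not_le)
  define G where "G = (\<Sum>i<n. sgn (c (g i)) *\<^sub>R g i)"
  interpret c: bounded_linear c by (fact c)
  have "onorm c = (\<Sum>i<n. onorm c / n)"
    using \<open>0 < n\<close> by simp
  also have "\<dots> < (\<Sum>i<n. \<bar>c (g i)\<bar>)"
    using \<open>0 < n\<close> g by (intro sum_strict_mono) auto
  also have "\<dots> = c G"
    unfolding G_def c.sum c.scale by (intro sum.cong) (auto simp: sgn_if)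
  also have "\<dots> \<le> onorm c * norm G"
    using onorm[OF c, of G] by simp
  also have "\<dots> \<le> onorm c"
    unfolding G_def using g disj onorm_pos_le[OF c]
    by (intro mult_left_le norm_sum_disjoint_supports_le) (auto simp: abs_sgn_eq)
  finally show False
    by simp
qed

section \<open>The Daugavet equation for rank-one operators\<close>

lemma exists_peak_small_functional_change:
  fixes c :: "('a::t2_space \<Rightarrow>\<^sub>C real) \<Rightarrow> real"
  assumes compact: "compact (UNIV :: 'a set)" and perfect: "\<And>x::'a. x islimpt UNIV"
    and c: "bounded_linear c" and W: "open W" "W \<noteq> {}"
    and "norm y \<le> 1" "0 < \<delta>" "0 < \<eta>"
  obtains x U where "norm x \<le> 1" "\<bar>c x - c y\<bar> \<le> \<eta>" "open U" "U \<noteq> {}" "U \<subseteq> W"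
    "\<And>t. t \<in> U \<Longrightarrow> 1 - \<delta> < apply_bcontfun x t"
proof -
  interpret c: bounded_linear c by (fact c)
  obtain n :: nat where n: "2 * onorm c / \<eta> < n"
    using reals_Archimedean2 by blast
  moreover have "0 \<le> 2 * onorm c / \<eta>"
    using onorm_pos_le[OF c] \<open>0 < \<eta>\<close> by simp
  ultimately have "0 < n"
    by linarith
  obtain V where V: "\<forall>i<n. open (V i) \<and> V i \<noteq> {} \<and> V i \<subseteq> W" "disjoint_family_on V {..<n}"
    using exists_disjoint_open_subsets[OF perfect W] by blast
  obtain i where "i < n" and small: "\<forall>g. norm g \<le> 1 \<and> (\<forall>t. t \<notin> V i \<longrightarrow> apply_bcontfun g t = 0)
      \<longrightarrow> \<bar>c g\<bar> \<le> onorm c / n"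
    using exists_piece_small_functional[OF c \<open>0 < n\<close> V(2)] by blast
  then have Vi: "open (V i)" "V i \<noteq> {}" "V i \<subseteq> W"
    using V(1) by auto
  then obtain p where "p \<in> V i"
    by blast
  obtain x where x: "norm x \<le> 1" "apply_bcontfun x p = 1"
    "\<And>t. t \<notin> V i \<Longrightarrow> apply_bcontfun x t = apply_bcontfun y t"
    using exists_peak_perturbation[OF compact Vi(1) \<open>p \<in> V i\<close> \<open>norm y \<le> 1\<close>] by blast
  have "norm ((1/2) *\<^sub>R (x - y)) \<le> 1"
    using x(1) \<open>norm y \<le> 1\<close> norm_triangle_ineq4[of x y] by simp
  then have "\<bar>c ((1/2) *\<^sub>R (x - y))\<bar> \<le> onorm c / n"
    using small x(3) by simp
  then have "\<bar>c x - c y\<bar> \<le> 2 * onorm c / n"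
    by (simp add: c.scale c.diff mult.commute)
  also have "\<dots> \<le> \<eta>"
    using n \<open>0 < n\<close> \<open>0 < \<eta>\<close> by (simp add: field_simps)
  finally have "\<bar>c x - c y\<bar> \<le> \<eta>" .
  moreover have "open (V i \<inter> {t. 1 - \<delta> < apply_bcontfun x t})"
    using Vi(1) by (intro open_Int open_Collect_less continuous_intros) auto
  moreover have "p \<in> V i \<inter> {t. 1 - \<delta> < apply_bcontfun x t}"
    using \<open>p \<in> V i\<close> x(2) \<open>0 < \<delta>\<close> by simp
  ultimately show thesis
    using x(1) Vi(3) by (intro that[of x "V i \<inter> {t. 1 - \<delta> < apply_bcontfun x t}"]) auto
qed

lemma daugavet_lower_bound_on_level_set:
  fixes c :: "('a::t2_space \<Rightarrow>\<^sub>C real) \<Rightarrow> real"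
  assumes compact: "compact (UNIV :: 'a set)" and perfect: "\<And>x::'a. x islimpt UNIV"
    and c: "bounded_linear c" and h: "h \<in> ell_inf" "\<And>t. \<bar>h t\<bar> \<le> H"
    and "0 \<le> b" and level: "\<not> first_category {t. b < h t}"
    and y: "norm y \<le> 1" "0 \<le> c y" and "0 < \<delta>" "0 < \<eta>"
  shows "\<exists>x. norm x \<le> 1 \<and> 1 - \<delta> + c y * b - \<eta> * H \<le> qnorm (\<lambda>t. apply_bcontfun x t + c x * h t)"
proof -
  obtain W where W: "open W" "W \<noteq> {}"
    and local: "\<And>V. open V \<Longrightarrow> V \<noteq> {} \<Longrightarrow> V \<subseteq> W \<Longrightarrow> \<not> first_category ({t. b < h t} \<inter> V)"
    using not_first_category_localize[OF level] by blast
  obtain x U where x: "norm x \<le> 1" "\<bar>c x - c y\<bar> \<le> \<eta>"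
    and U: "open U" "U \<noteq> {}" "U \<subseteq> W" "\<And>t. t \<in> U \<Longrightarrow> 1 - \<delta> < apply_bcontfun x t"
    using exists_peak_small_functional_change[OF compact perfect c W y(1) \<open>0 < \<delta>\<close> \<open>0 < \<eta>\<close>] by blast
  define r where "r = 1 - \<delta> + c y * b - \<eta> * H"
  have "r \<le> \<bar>apply_bcontfun x t + c x * h t\<bar>" if t: "t \<in> {t. b < h t} \<inter> U" for t
  proof -
    have "c y * b \<le> c y * h t"
      using t y(2) by (intro mult_left_mono) auto
    moreover have "\<bar>(c x - c y) * h t\<bar> \<le> \<eta> * H"
      unfolding abs_mult using x(2) h(2)[of t] \<open>0 < \<eta>\<close> by (intro mult_mono) auto
    moreover have "1 - \<delta> < apply_bcontfun x t"
      using U(4) t by blast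
    ultimately have "r \<le> apply_bcontfun x t + c y * h t + (c x - c y) * h t"
      unfolding r_def by linarith
    then show ?thesis
      by (simp add: algebra_simps)
  qed
  moreover have "\<not> first_category ({t. b < h t} \<inter> U)"
    using local U(1-3) by blast
  ultimately have "\<not> first_category {t. r \<le> \<bar>apply_bcontfun x t + c x * h t\<bar>}"
    using first_category_subset by (metis (no_types, lifting) mem_Collect_eq subsetI)
  then have "r \<le> qnorm (\<lambda>t. apply_bcontfun x t + c x * h t)"
    using h(1) apply_bcontfun_in_ell_inf
    by (intro qnorm_ge_if_not_first_category ell_inf_add ell_inf_scale)
  then show ?thesis
    using x(1) unfolding r_def by blast
qed

lemma not_first_category_signed_level_set:
  assumes "\<not> first_category {t. b < \<bar>h t\<bar>}"
  obtains \<sigma> :: real where "\<bar>\<sigma>\<bar> = 1" "\<not> first_category {t. b < \<sigma> * h t}"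
proof -
  have "{t. b < \<bar>h t\<bar>} = {t. b < 1 * h t} \<union> {t. b < (-1) * h t}"
    by auto
  then have "\<not> first_category {t. b < 1 * h t} \<or> \<not> first_category {t. b < (-1) * h t}"
    using assms first_category_Un by metis
  then show thesis
    using that[of 1] that[of "-1"] by auto
qed

lemma daugavet_lower_bound_on_abs_level_set:
  fixes c :: "('a::t2_space \<Rightarrow>\<^sub>C real) \<Rightarrow> real"
  assumes compact: "compact (UNIV :: 'a set)" and perfect: "\<And>x::'a. x islimpt UNIV"
    and c: "bounded_linear c" and h: "h \<in> ell_inf" "\<And>t. \<bar>h t\<bar> \<le> H"
    and "0 \<le> b" and level: "\<not> first_category {t. b < \<bar>h t\<bar>}"
    and "norm y \<le> 1" "0 < \<delta>" "0 < \<eta>"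
  shows "\<exists>x. norm x \<le> 1 \<and> 1 - \<delta> + \<bar>c y\<bar> * b - \<eta> * H \<le> qnorm (\<lambda>t. apply_bcontfun x t + c x * h t)"
proof -
  interpret c: bounded_linear c by (fact c)
  obtain \<sigma> :: real where \<sigma>: "\<bar>\<sigma>\<bar> = 1" "\<not> first_category {t. b < \<sigma> * h t}"
    using level by (rule not_first_category_signed_level_set)
  \<comment> \<open>Replacing c, h by \<sigma> c, \<sigma> h (which leaves c x * h t unchanged) and y by \<plusminus>y reduces
    to the previous lemma.\<close>
  define y' where "y' = sgn (\<sigma> * c y) *\<^sub>R y"
  have "\<sigma> * c y' = sgn (\<sigma> * c y) * (\<sigma> * c y)"
    unfolding y'_def by (simp add: c.scale)
  also have "\<dots> = \<bar>\<sigma> * c y\<bar>"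
    by (simp add: abs_sgn mult.commute)
  also have "\<dots> = \<bar>c y\<bar>"
    using \<sigma>(1) by (simp add: abs_mult)
  finally have "\<sigma> * c y' = \<bar>c y\<bar>" .
  moreover have "bounded_linear (\<lambda>x. \<sigma> * c x)"
    using c by (rule bounded_linear_const_mult)
  moreover have "(\<lambda>t. \<sigma> * h t) \<in> ell_inf" "\<And>t. \<bar>\<sigma> * h t\<bar> \<le> H"
    using h \<sigma>(1) by (auto intro: ell_inf_scale simp: abs_mult)
  moreover have "norm y' \<le> 1"
    unfolding y'_def using \<open>norm y \<le> 1\<close> by (simp add: abs_sgn_eq)
  ultimately obtain x where x: "norm x \<le> 1"
    "1 - \<delta> + \<bar>c y\<bar> * b - \<eta> * H \<le> qnorm (\<lambda>t. apply_bcontfun x t + \<sigma> * c x * (\<sigma> * h t))"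
    using daugavet_lower_bound_on_level_set[OF compact perfect, of "\<lambda>x. \<sigma> * c x" "\<lambda>t. \<sigma> * h t" H b y' \<delta> \<eta>]
      \<sigma>(2) assms(6,9,10) by auto
  have "\<sigma> * \<sigma> = 1"
    using \<sigma>(1) by (metis abs_mult_self_eq mult_1)
  then have \<sigma>_cancel: "\<sigma> * c x * (\<sigma> * h t) = c x * h t" for t
    by (metis mult.assoc mult.left_commute mult_1)
  show ?thesis
    using x unfolding \<sigma>_cancel by blast
qed

lemma rank_one_daugavet_lower_bound:
  fixes c :: "('a::t2_space \<Rightarrow>\<^sub>C real) \<Rightarrow> real"
  assumes compact: "compact (UNIV :: 'a set)" and perfect: "\<And>x::'a. x islimpt UNIV"
    and c: "bounded_linear c" and h: "h \<in> ell_inf" "h \<notin> m_space"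
    and "norm y \<le> 1" "0 < \<epsilon>"
  shows "\<exists>x. norm x \<le> 1 \<and> 1 + \<bar>c y\<bar> * qnorm h - \<epsilon> < qnorm (\<lambda>t. apply_bcontfun x t + c x * h t)"
proof -
  define a where "a = qnorm h"
  have "0 < a"
    unfolding a_def using qnorm_pos[OF h] .
  obtain H where H: "\<And>t. \<bar>h t\<bar> \<le> H"
    using h(1) by (meson ell_infE)
  then have "0 \<le> H"
    by (meson abs_ge_zero order_trans)
  define \<delta> where "\<delta> = min a (\<epsilon> / (3 * (1 + \<bar>c y\<bar>)))"
  define \<eta> where "\<eta> = \<epsilon> / (3 * (1 + H))"
  have "0 < \<delta>" "\<delta> \<le> a" "0 < \<eta>"
    unfolding \<delta>_def \<eta>_def using \<open>0 < a\<close> \<open>0 < \<epsilon>\<close> \<open>0 \<le> H\<close> by auto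
  have "\<delta> \<le> \<epsilon> / (3 * (1 + \<bar>c y\<bar>))"
    unfolding \<delta>_def by simp
  then have \<delta>_small: "\<delta> + \<bar>c y\<bar> * \<delta> \<le> \<epsilon> / 3"
    by (simp add: pos_le_divide_eq algebra_simps)
  have "\<eta> * (1 + H) = \<epsilon> / 3"
    unfolding \<eta>_def using \<open>0 \<le> H\<close> by (simp add: field_simps)
  then have \<eta>_small: "\<eta> * H < \<epsilon> / 3"
    using \<open>0 < \<eta>\<close> by (simp add: algebra_simps)
  have "\<not> first_category {t. a - \<delta> < \<bar>h t\<bar>}"
    using h(1) \<open>0 < \<delta>\<close> \<open>\<delta> \<le> a\<close> unfolding a_def by (intro not_first_category_level_set) auto
  then obtain x where x: "norm x \<le> 1"
    "1 - \<delta> + \<bar>c y\<bar> * (a - \<delta>) - \<eta> * H \<le> qnorm (\<lambda>t. apply_bcontfun x t + c x * h t)"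
    using daugavet_lower_bound_on_abs_level_set[OF compact perfect c h(1) H, of "a - \<delta>" y \<delta> \<eta>]
      \<open>\<delta> \<le> a\<close> \<open>norm y \<le> 1\<close> \<open>0 < \<delta>\<close> \<open>0 < \<eta>\<close> by auto
  moreover have "1 + \<bar>c y\<bar> * a - \<epsilon> < 1 - \<delta> + \<bar>c y\<bar> * (a - \<delta>) - \<eta> * H"
    using \<delta>_small \<eta>_small \<open>0 < \<epsilon>\<close> by (simp add: right_diff_distrib)
  ultimately show ?thesis
    unfolding a_def by (intro exI[of _ x]) auto
qed

lemma scaled_in_m_space_imp_zero:
  assumes "(\<lambda>t. k * h t) \<in> m_space" "h \<notin> m_space"
  shows "k = 0"
proof (rule ccontr)
  assume "k \<noteq> 0"
  then have "h = (\<lambda>t. (1 / k) * (k * h t))"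
    by simp
  then show False
    using m_space_scale[OF assms(1), of "1 / k"] assms(2) by simp
qed

lemma lin_mod_m_coefficient_lincomb:
  assumes lin: "lin_mod_m T" and "h \<notin> m_space" and c: "\<And>x. T x - (\<lambda>t. c x * h t) \<in> m_space"
  shows "c (a *\<^sub>R x + b *\<^sub>R y) = a * c x + b * c y"
proof -
  let ?d = "\<lambda>t. (T (a *\<^sub>R x + b *\<^sub>R y) - (\<lambda>t. a * T x t + b * T y t)) t
    + (a * (T x - (\<lambda>t. c x * h t)) t + b * (T y - (\<lambda>t. c y * h t)) t)"
  have "T (a *\<^sub>R x + b *\<^sub>R y) - (\<lambda>t. a * T x t + b * T y t) \<in> m_space"
    using lin unfolding lin_mod_m_def by blast
  then have "?d \<in> m_space"
    using c[of x] c[of y] by (intro m_space_add m_space_scale)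
  then have "(T (a *\<^sub>R x + b *\<^sub>R y) - (\<lambda>t. c (a *\<^sub>R x + b *\<^sub>R y) * h t)) - ?d \<in> m_space"
    by (rule m_space_diff[OF c])
  moreover have "(T (a *\<^sub>R x + b *\<^sub>R y) - (\<lambda>t. c (a *\<^sub>R x + b *\<^sub>R y) * h t)) - ?d
      = (\<lambda>t. (a * c x + b * c y - c (a *\<^sub>R x + b *\<^sub>R y)) * h t)"
    by (simp add: fun_eq_iff algebra_simps)
  ultimately show ?thesis
    using scaled_in_m_space_imp_zero \<open>h \<notin> m_space\<close> by fastforce
qed

lemma rank_one_mod_m_factorization:
  assumes lin: "lin_mod_m T" and bounded: "bounded_mod_m T" and rank_one: "rank_one_mod_m T"
  obtains h c where "h \<in> ell_inf" "h \<notin> m_space" "bounded_linear c"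
    "\<And>x. T x - (\<lambda>t. c x * h t) \<in> m_space" "\<And>x. qnorm (T x) = \<bar>c x\<bar> * qnorm h"
proof -
  obtain h where h: "h \<in> ell_inf" "h \<notin> m_space" and "\<forall>x. \<exists>k. T x - (\<lambda>t. k * h t) \<in> m_space"
    using rank_one unfolding rank_one_mod_m_def by blast
  then obtain c where c: "\<And>x. T x - (\<lambda>t. c x * h t) \<in> m_space"
    by metis
  have qnorm_T: "qnorm (T x) = \<bar>c x\<bar> * qnorm h" for x
    using qnorm_cong[OF c] qnorm_scale[OF h(1)] by simp
  obtain B where B: "\<And>x. qnorm (T x) \<le> B * norm x"
    using bounded unfolding bounded_mod_m_def by blast
  have "bounded_linear c"
  proof (rule bounded_linear_intro)
    show "c (x + y) = c x + c y" for x y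
      using lin_mod_m_coefficient_lincomb[OF lin h(2) c, of 1 x 1 y] by simp
    show "c (r *\<^sub>R x) = r *\<^sub>R c x" for r x
      using lin_mod_m_coefficient_lincomb[OF lin h(2) c, of r x 0 x] by simp
    have "0 < qnorm h"
      using qnorm_pos[OF h] .
    show "norm (c x) \<le> norm x * max 0 (B / qnorm h)" for x
    proof -
      have "\<bar>c x\<bar> * qnorm h \<le> B * norm x"
        using B[of x] qnorm_T[of x] by simp
      then have "\<bar>c x\<bar> \<le> B / qnorm h * norm x"
        using \<open>0 < qnorm h\<close> by (simp add: field_simps)
      also have "\<dots> \<le> max 0 (B / qnorm h) * norm x"
        by (intro mult_right_mono) auto
      finally show ?thesis
        by (simp add: mult.commute)
    qed
  qed
  then show thesis
    using that h c qnorm_T by blast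
qed

lemma bdd_above_onorm_unit_ball:
  fixes c :: "'a::real_normed_vector \<Rightarrow> real"
  assumes "bounded_linear c" "0 \<le> a"
  shows "bdd_above ((\<lambda>x. \<bar>c x\<bar> * a) ` {x. norm x \<le> 1})"
proof (rule bdd_aboveI2)
  fix x :: 'a assume "x \<in> {x. norm x \<le> 1}"
  then have "\<bar>c x\<bar> \<le> onorm c"
    using onorm[OF assms(1), of x] onorm_pos_le[OF assms(1)] by (simp add: mult_left_le order_trans)
  then show "\<bar>c x\<bar> * a \<le> onorm c * a"
    using assms(2) by (rule mult_right_mono)
qed

lemma cSUP_eq_add_cSUP:
  fixes f g :: "'a \<Rightarrow> real"
  assumes "S \<noteq> {}" "bdd_above (g ` S)"
    and upper: "\<And>x. x \<in> S \<Longrightarrow> f x \<le> k + g x"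
    and lower: "\<And>y \<epsilon>. y \<in> S \<Longrightarrow> 0 < \<epsilon> \<Longrightarrow> \<exists>x\<in>S. k + g y - \<epsilon> < f x"
  shows "(SUP x\<in>S. f x) = k + (SUP x\<in>S. g x)"
proof (rule antisym)
  have f_le: "f x \<le> k + (SUP x\<in>S. g x)" if "x \<in> S" for x
    using upper[OF that] cSUP_upper[OF that assms(2)] by simp
  then show "(SUP x\<in>S. f x) \<le> k + (SUP x\<in>S. g x)"
    using assms(1) by (rule cSUP_least[rotated])
  have "g y \<le> (SUP x\<in>S. f x) - k" if y: "y \<in> S" for y
  proof (rule field_le_epsilon)
    fix \<epsilon> :: real assume "0 < \<epsilon>"
    then obtain x where "x \<in> S" "k + g y - \<epsilon> < f x"
      using lower[OF y] by blast
    moreover have "f x \<le> (SUP x\<in>S. f x)"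
      using f_le by (intro cSUP_upper[OF \<open>x \<in> S\<close>] bdd_aboveI2)
    ultimately show "g y \<le> (SUP x\<in>S. f x) - k + \<epsilon>"
      by simp
  qed
  then have "(SUP x\<in>S. g x) \<le> (SUP x\<in>S. f x) - k"
    using assms(1) by (rule cSUP_least[rotated])
  then show "k + (SUP x\<in>S. g x) \<le> (SUP x\<in>S. f x)"
    by simp
qed

theorem mainTheorem9:
  assumes "compact (UNIV :: 'a::t2_space set)"
    and "\<forall>x::'a. x islimpt UNIV"
  shows "daugavet_CK_m0 TYPE('a)"
  unfolding daugavet_CK_m0_def
proof (intro allI impI)
  fix T :: "('a \<Rightarrow>\<^sub>C real) \<Rightarrow> ('a \<Rightarrow> real)"
  assume T: "lin_mod_m T \<and> bounded_mod_m T \<and> rank_one_mod_m T"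
  then obtain h c where h: "h \<in> ell_inf" "h \<notin> m_space" and c: "bounded_linear c"
    and T_eq: "\<And>x. T x - (\<lambda>t. c x * h t) \<in> m_space" and qnorm_T: "\<And>x. qnorm (T x) = \<bar>c x\<bar> * qnorm h"
    using rank_one_mod_m_factorization by metis
  have qnorm_J_plus_T: "qnorm (\<lambda>t. apply_bcontfun x t + T x t) = qnorm (\<lambda>t. apply_bcontfun x t + c x * h t)" for x
    using T_eq[of x] by (intro qnorm_cong) (simp add: fun_diff_def)
  show "(SUP x\<in>{x. norm x \<le> 1}. qnorm (\<lambda>t. apply_bcontfun x t + T x t)) = 1 + opnorm_mod_m T"
    unfolding opnorm_mod_m_def qnorm_T
  proof (rule cSUP_eq_add_cSUP)
    show "{x :: 'a \<Rightarrow>\<^sub>C real. norm x \<le> 1} \<noteq> {}"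
      by (auto intro: exI[of _ 0])
    show "bdd_above ((\<lambda>x. \<bar>c x\<bar> * qnorm h) ` {x. norm x \<le> 1})"
      using bdd_above_onorm_unit_ball[OF c qnorm_nonneg[OF h(1)]] .
    show "qnorm (\<lambda>t. apply_bcontfun x t + T x t) \<le> 1 + \<bar>c x\<bar> * qnorm h" if "x \<in> {x. norm x \<le> 1}" for x
      using qnorm_apply_bcontfun_add_le[of "T x" x] T qnorm_T[of x] that unfolding lin_mod_m_def by auto
    show "\<exists>x\<in>{x. norm x \<le> 1}. 1 + \<bar>c y\<bar> * qnorm h - \<epsilon> < qnorm (\<lambda>t. apply_bcontfun x t + T x t)"
      if "y \<in> {x. norm x \<le> 1}" "0 < \<epsilon>" for y \<epsilon>
      using rank_one_daugavet_lower_bound[OF assms(1) assms(2)[rule_format] c h, of y \<epsilon>] that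
      unfolding qnorm_J_plus_T by auto
  qed
qed

end
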